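(* For $n\ge2$ and all $P,Q\in\Gamma_n$, $D_{Jh}(P\|Q)\le \frac1{12}D_{\Psi\Delta}(P\|Q)$.
   Context: $\Gamma_n=\{P=(p_1,\dots,p_n): p_i>0,\ \sum p_i=1\}$. $h(P\|Q)=\frac12\sum_{i=1}^n(\sqrt{p_i}-\sqrt{q_i})^2$; $J(P\|Q)=\sum_{i=1}^n(p_i-q_i)\ln\frac{p_i}{q_i}$; $\Delta(P\|Q)=\sum_{i=1}^n\frac{(p_i-q_i)^2}{p_i+q_i}$; $\Psi(P\|Q)=\sum_{i=1}^n\frac{(p_i-q_i)^2(p_i+q_i)}{p_iq_i}$. $D_{Jh}=\frac18J-h$, $D_{\Psi\Delta}=\frac1{16}\Psi-\frac14\Delta$. *)

theory Defs
  imports Complex_Main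
begin

definition Gamma :: "nat \<Rightarrow> (nat \<Rightarrow> real) set" where
  "Gamma n = {p. (\<forall>i<n. p i > 0) \<and> (\<Sum>i<n. p i) = 1}"

definition hellinger :: "nat \<Rightarrow> (nat \<Rightarrow> real) \<Rightarrow> (nat \<Rightarrow> real) \<Rightarrow> real" where
  "hellinger n p q = (1/2) * (\<Sum>i<n. (sqrt (p i) - sqrt (q i))^2)"

definition Jdiv :: "nat \<Rightarrow> (nat \<Rightarrow> real) \<Rightarrow> (nat \<Rightarrow> real) \<Rightarrow> real" where
  "Jdiv n p q = (\<Sum>i<n. (p i - q i) * ln (p i / q i))"

definition Delta :: "nat \<Rightarrow> (nat \<Rightarrow> real) \<Rightarrow> (nat \<Rightarrow> real) \<Rightarrow> real" where
  "Delta n p q = (\<Sum>i<n. (p i - q i)^2 / (p i + q i))"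

definition Psi :: "nat \<Rightarrow> (nat \<Rightarrow> real) \<Rightarrow> (nat \<Rightarrow> real) \<Rightarrow> real" where
  "Psi n p q = (\<Sum>i<n. (p i - q i)^2 * (p i + q i) / (p i * q i))"

definition D_Jh :: "nat \<Rightarrow> (nat \<Rightarrow> real) \<Rightarrow> (nat \<Rightarrow> real) \<Rightarrow> real" where
  "D_Jh n p q = (1/8) * Jdiv n p q - hellinger n p q"

definition D_PsiDelta :: "nat \<Rightarrow> (nat \<Rightarrow> real) \<Rightarrow> (nat \<Rightarrow> real) \<Rightarrow> real" where
  "D_PsiDelta n p q = (1/16) * Psi n p q - (1/4) * Delta n p q"

end

theory Submission
  imports Defs
begin

text \<open>Every divergence involved is a sum of coordinatewise terms, so it suffices to compare the
terms for a single pair \<open>a, b > 0\<close>.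
Writing \<open>b = s\<^sup>2\<close> and \<open>a = (t s)\<^sup>2\<close>, the difference of the two sides becomes
\<open>s\<^sup>2 (t\<^sup>2 - 1) (ln_approx t - ln t) / 4\<close>. The derivative of \<open>ln_approx - ln\<close> is \<open>(t - 1)\<^sup>4\<close>
times a positive rational function, so \<open>ln_approx - ln\<close> is nondecreasing on \<open>(0, \<infinity>)\<close> and
vanishes at \<open>1\<close>; hence it has the sign of \<open>t\<^sup>2 - 1\<close>.\<close>

lemma deriv_nonneg_root_imp_mult_nonneg:
  fixes g g' :: "real \<Rightarrow> real"
  assumes "\<And>x. a < x \<Longrightarrow> (g has_real_derivative g' x) (at x)"
    and "\<And>x. a < x \<Longrightarrow> 0 \<le> g' x"
    and "a < c" "a < t" "g c = 0"
  shows "0 \<le> (t - c) * g t"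
proof (cases "c \<le> t")
  case True
  have "g c \<le> g t" by (rule deriv_nonneg_imp_mono[of c t g g']) (use assms True in auto)
  with True \<open>g c = 0\<close> show ?thesis by simp
next
  case False
  have "g t \<le> g c" by (rule deriv_nonneg_imp_mono[of t c g g']) (use assms False in auto)
  with False \<open>g c = 0\<close> show ?thesis by (simp add: mult_nonpos_nonpos)
qed

definition ln_approx :: "real \<Rightarrow> real" where
  "ln_approx t = 2 * (t - 1) / (t + 1) + (t^2 - 1)^3 / (48 * t^2 * (t^2 + 1))"

lemma has_real_derivative_ln_approx_minus_ln:
  fixes t :: real
  assumes "t > 0"
  shows "((\<lambda>x. ln_approx x - ln x) has_real_derivative
           (t - 1)^4 * ((t^2 + 1)^3 - 4 * t^3 + 6 * t * (t^2 + 1) * (t^2 - t + 1))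
             / (24 * t^3 * (t + 1)^2 * (t^2 + 1)^2)) (at t)"
proof -
  have "t^2 + 1 > 0" using zero_le_power2[of t] by linarith
  with assms have nz: "t + 1 \<noteq> 0" "t^2 + 1 \<noteq> 0" "t \<noteq> 0" "48 * t^2 * (t^2 + 1) \<noteq> 0"
    by auto
  have "((\<lambda>x. ln_approx x - ln x) has_real_derivative
          4 / (t + 1)^2 + (6 * t * (t^2 - 1)^2 * (48 * t^2 * (t^2 + 1))
            - (t^2 - 1)^3 * (96 * t * (2 * t^2 + 1))) / (48 * t^2 * (t^2 + 1))^2 - 1 / t) (at t)"
    unfolding ln_approx_def[abs_def] using assms nz
    by (auto intro!: derivative_eq_intros simp: power2_eq_square algebra_simps)
  moreover have "4 / (t + 1)^2 + (6 * t * (t^2 - 1)^2 * (48 * t^2 * (t^2 + 1))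
            - (t^2 - 1)^3 * (96 * t * (2 * t^2 + 1))) / (48 * t^2 * (t^2 + 1))^2 - 1 / t
       = (t - 1)^4 * ((t^2 + 1)^3 - 4 * t^3 + 6 * t * (t^2 + 1) * (t^2 - t + 1))
           / (24 * t^3 * (t + 1)^2 * (t^2 + 1)^2)"
    using nz by (simp add: field_simps) algebra
  ultimately show ?thesis by simp
qed

lemma deriv_ln_approx_minus_ln_nonneg:
  fixes t :: real
  assumes "t > 0"
  shows "0 \<le> (t - 1)^4 * ((t^2 + 1)^3 - 4 * t^3 + 6 * t * (t^2 + 1) * (t^2 - t + 1))
             / (24 * t^3 * (t + 1)^2 * (t^2 + 1)^2)"
proof -
  have "2 * t \<le> t^2 + 1" using zero_le_power2[of "t - 1"] by (simp add: power2_diff)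
  then have "(2 * t)^3 \<le> (t^2 + 1)^3" using assms by (intro power_mono) auto
  then have "8 * t^3 \<le> (t^2 + 1)^3" by simp
  moreover have "0 \<le> 6 * t * (t^2 + 1) * (t^2 - t + 1)"
    using zero_le_power2[of "t - 1"] zero_le_power2[of t] assms by (simp add: power2_diff)
  moreover have "0 < t^3" using assms by simp
  ultimately have "0 \<le> (t^2 + 1)^3 - 4 * t^3 + 6 * t * (t^2 + 1) * (t^2 - t + 1)"
    by linarith
  with assms show ?thesis by simp
qed

lemma mult_ln_approx_minus_ln_nonneg:
  fixes t :: real
  assumes "t > 0"
  shows "0 \<le> (t^2 - 1) * (ln_approx t - ln t)"
proof -
  have "0 \<le> (t - 1) * (ln_approx t - ln t)"
    by (rule deriv_nonneg_root_imp_mult_nonneg[OF has_real_derivative_ln_approx_minus_ln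
          deriv_ln_approx_minus_ln_nonneg, of 0]) (use assms in \<open>auto simp: ln_approx_def\<close>)
  then have "0 \<le> (t + 1) * ((t - 1) * (ln_approx t - ln t))"
    using assms by simp
  then show ?thesis by (simp add: power2_eq_square algebra_simps)
qed

lemma D_PsiDelta_term_minus_D_Jh_term_eq:
  fixes t s :: real
  assumes "t > 0" "s > 0"
  shows "(1/12) * ((1/16) * (((t*s)^2 - s^2)^2 * ((t*s)^2 + s^2) / ((t*s)^2 * s^2))
                  - (1/4) * (((t*s)^2 - s^2)^2 / ((t*s)^2 + s^2)))
         - ((1/8) * (((t*s)^2 - s^2) * (2 * ln t)) - (1/2) * (t*s - s)^2)
       = s^2 * ((t^2 - 1) * (ln_approx t - ln t)) / 4"
proof -
  have "t^2 + 1 > 0" using zero_le_power2[of t] by linarith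
  moreover have "s^2 * t^2 + s^2 > 0" using assms by (simp add: add_nonneg_pos)
  ultimately have "t^2 + 1 \<noteq> 0" "s^2 * t^2 + s^2 \<noteq> 0" "t + 1 \<noteq> 0"
    using assms by auto
  with assms show ?thesis
    unfolding ln_approx_def by (simp add: divide_simps power_mult_distrib) algebra
qed

lemma D_Jh_term_le_D_PsiDelta_term:
  fixes a b :: real
  assumes "a > 0" "b > 0"
  shows "(1/8) * ((a - b) * ln (a / b)) - (1/2) * (sqrt a - sqrt b)^2
         \<le> (1/12) * ((1/16) * ((a - b)^2 * (a + b) / (a * b)) - (1/4) * ((a - b)^2 / (a + b)))"
proof -
  define s t where "s = sqrt b" and "t = sqrt a / sqrt b"
  have "s > 0" "t > 0" using assms by (auto simp: s_def t_def)
  have a: "a = (t * s)^2" and b: "b = s^2" and "sqrt a = t * s"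
    using assms by (auto simp: s_def t_def)
  have "ln (a / b) = 2 * ln t"
    using \<open>s > 0\<close> \<open>t > 0\<close> by (simp add: a b power_mult_distrib ln_realpow)
  have "0 \<le> s^2 * ((t^2 - 1) * (ln_approx t - ln t)) / 4"
    using \<open>t > 0\<close> by (intro divide_nonneg_pos mult_nonneg_nonneg mult_ln_approx_minus_ln_nonneg) simp_all
  then show ?thesis
    using D_PsiDelta_term_minus_D_Jh_term_eq[OF \<open>t > 0\<close> \<open>s > 0\<close>]
    unfolding a[symmetric] b[symmetric] \<open>ln (a / b) = 2 * ln t\<close> \<open>sqrt a = t * s\<close> s_def[symmetric]
    by linarith
qed

theorem proposition5p9:
  fixes n :: nat and p q :: "nat \<Rightarrow> real"
  assumes "n \<ge> 2" and "p \<in> Gamma n" and "q \<in> Gamma n"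
  shows "D_Jh n p q \<le> (1/12) * D_PsiDelta n p q"
proof -
  have pos: "p i > 0" "q i > 0" if "i < n" for i
    using assms(2,3) that by (auto simp: Gamma_def)
  have "D_Jh n p q = (\<Sum>i<n. (1/8) * ((p i - q i) * ln (p i / q i)) - (1/2) * (sqrt (p i) - sqrt (q i))^2)"
    unfolding D_Jh_def Jdiv_def hellinger_def by (simp add: sum_subtractf sum_distrib_left)
  also have "\<dots> \<le> (\<Sum>i<n. (1/12) * ((1/16) * ((p i - q i)^2 * (p i + q i) / (p i * q i))
                                  - (1/4) * ((p i - q i)^2 / (p i + q i))))"
    by (intro sum_mono D_Jh_term_le_D_PsiDelta_term pos) simp_all
  also have "\<dots> = (1/12) * D_PsiDelta n p q"
    unfolding D_PsiDelta_def Psi_def Delta_def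
    by (simp only: right_diff_distrib sum_subtractf sum_distrib_left)
  finally show ?thesis .
qed

end
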